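(* Let $R$ be a commutative ring. (i) If $R$ is a GPF-ring, then $R$ is a quasi p.f. ring. (ii) If $R$ is a quasi p.f. ring, then $R$ is an mp-ring.
   Context: $R$ is a GPF-ring if for each $f\in R$ there is $n\geq 1$ with $Rf^n$ a flat $R$-module. An ideal $I$ is quasi-pure if for each $f\in I$ there is $g\in I$ with $f(1-g)$ nilpotent; $R$ is a quasi p.f. ring if $\operatorname{Ann}(f)$ is quasi-pure for every $f\in R$. $R$ is an mp-ring if every prime ideal of $R$ contains a unique minimal prime ideal (equivalently $\mathfrak p+\mathfrak q=R$ for distinct minimal primes $\mathfrak p,\mathfrak q$). *)

theory Defs
  imports Main
begin

definition is_ideal :: "'a::comm_ring_1 set \<Rightarrow> bool" where
  "is_ideal I \<longleftrightarrow> 0 \<in> I \<and> (\<forall>x\<in>I. \<forall>y\<in>I. x + y \<in> I) \<and> (\<forall>r. \<forall>x\<in>I. r * x \<in> I)"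

definition prime_ideal :: "'a::comm_ring_1 set \<Rightarrow> bool" where
  "prime_ideal P \<longleftrightarrow> is_ideal P \<and> P \<noteq> UNIV \<and> (\<forall>a b. a * b \<in> P \<longrightarrow> a \<in> P \<or> b \<in> P)"

definition minimal_prime :: "'a::comm_ring_1 set \<Rightarrow> bool" where
  "minimal_prime P \<longleftrightarrow> prime_ideal P \<and> (\<forall>Q. prime_ideal Q \<and> Q \<subseteq> P \<longrightarrow> Q = P)"

definition nilpotent :: "'a::comm_ring_1 \<Rightarrow> bool" where
  "nilpotent x \<longleftrightarrow> (\<exists>n. x ^ n = 0)"

definition Ann :: "'a::comm_ring_1 \<Rightarrow> 'a set" where
  "Ann f = {r. r * f = 0}"

definition principal :: "'a::comm_ring_1 \<Rightarrow> 'a set" where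
  "principal a = {r * a | r. True}"

text \<open>Flatness of a submodule M of R (viewed as R-module), via the equational
  criterion of flatness: every relation sum r_i x_i = 0 with x_i in M is trivial.\<close>
definition flat_submodule :: "'a::comm_ring_1 set \<Rightarrow> bool" where
  "flat_submodule M \<longleftrightarrow>
     (\<forall>(k::nat) (r::nat \<Rightarrow> 'a) x.
        (\<forall>i<k. x i \<in> M) \<and> (\<Sum>i<k. r i * x i) = 0 \<longrightarrow>
        (\<exists>(m::nat) (y::nat \<Rightarrow> 'a) (a::nat \<Rightarrow> nat \<Rightarrow> 'a).
           (\<forall>j<m. y j \<in> M) \<and>
           (\<forall>i<k. x i = (\<Sum>j<m. a i j * y j)) \<and>
           (\<forall>j<m. (\<Sum>i<k. r i * a i j) = 0)))"

definition GPF_ring :: "'a::comm_ring_1 itself \<Rightarrow> bool" where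
  "GPF_ring _ \<longleftrightarrow> (\<forall>f::'a. \<exists>n\<ge>1. flat_submodule (principal (f ^ n)))"

definition quasi_pure :: "'a::comm_ring_1 set \<Rightarrow> bool" where
  "quasi_pure I \<longleftrightarrow> (\<forall>f\<in>I. \<exists>g\<in>I. nilpotent (f * (1 - g)))"

definition quasi_pf_ring :: "'a::comm_ring_1 itself \<Rightarrow> bool" where
  "quasi_pf_ring _ \<longleftrightarrow> (\<forall>f::'a. quasi_pure (Ann f))"

definition mp_ring :: "'a::comm_ring_1 itself \<Rightarrow> bool" where
  "mp_ring _ \<longleftrightarrow> (\<forall>P::'a set. prime_ideal P \<longrightarrow> (\<exists>!Q. minimal_prime Q \<and> Q \<subseteq> P))"

end

theory Submission
  imports Defs
begin

text \<open>(i) If \<open>h f = 0\<close> and \<open>R h\<^sup>n\<close> is flat, the equational criterion applied to the relation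
  \<open>f \<cdot> h\<^sup>n = 0\<close> produces \<open>c \<in> Ann f\<close> with \<open>h\<^sup>n = c h\<^sup>n\<close>, so \<open>h (1 - c)\<close> is nilpotent.
  (ii) Every element \<open>x\<close> of a minimal prime \<open>Q\<close> satisfies \<open>s x\<^sup>k = 0\<close> for some \<open>s \<notin> Q\<close>.
  Quasi-purity of \<open>Ann (x\<^sup>k)\<close> yields \<open>g\<close> with \<open>g x\<^sup>k = 0\<close> and \<open>s (1 - g)\<close> nilpotent, so
  \<open>1 - g \<in> Q\<close>, while \<open>g\<close> lies in every prime avoiding \<open>x\<close>. Hence a second minimal prime
  below the same prime \<open>P\<close> cannot miss \<open>x\<close>, for otherwise \<open>g\<close> and \<open>1 - g\<close> both lie in \<open>P\<close>.\<close>

lemma is_ideal_zero: "is_ideal I \<Longrightarrow> 0 \<in> I"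
  unfolding is_ideal_def by blast

lemma is_ideal_add: "is_ideal I \<Longrightarrow> x \<in> I \<Longrightarrow> y \<in> I \<Longrightarrow> x + y \<in> I"
  unfolding is_ideal_def by blast

lemma is_ideal_mult_left: "is_ideal I \<Longrightarrow> x \<in> I \<Longrightarrow> r * x \<in> I"
  unfolding is_ideal_def by blast

lemma is_ideal_mult_right: "is_ideal I \<Longrightarrow> x \<in> I \<Longrightarrow> x * r \<in> I"
  using is_ideal_mult_left by (metis mult.commute)

lemma prime_ideal_is_ideal: "prime_ideal P \<Longrightarrow> is_ideal P"
  unfolding prime_ideal_def by blast

lemma prime_ideal_one_notin: "prime_ideal P \<Longrightarrow> 1 \<notin> P"
  unfolding prime_ideal_def using is_ideal_mult_left by (metis UNIV_eq_I mult.right_neutral)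

lemma prime_ideal_mult_cases: "prime_ideal P \<Longrightarrow> a * b \<in> P \<Longrightarrow> a \<in> P \<or> b \<in> P"
  unfolding prime_ideal_def by blast

lemma prime_ideal_power_mem: "prime_ideal P \<Longrightarrow> x ^ k \<in> P \<Longrightarrow> x \<in> P"
  by (induction k) (auto dest: prime_ideal_one_notin prime_ideal_mult_cases)

lemma prime_ideal_nilpotent_mem: "prime_ideal P \<Longrightarrow> nilpotent x \<Longrightarrow> x \<in> P"
  unfolding nilpotent_def
  by (metis prime_ideal_power_mem prime_ideal_is_ideal is_ideal_zero)

lemma flat_principal_annihilator:
  fixes a r :: "'a::comm_ring_1"
  assumes flat: "flat_submodule (principal a)" and ra: "r * a = 0"
  shows "\<exists>c. r * c = 0 \<and> c * a = a"
proof -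
  have "a \<in> principal a"
    unfolding principal_def by (metis (mono_tags, lifting) mem_Collect_eq mult_1)
  with ra obtain m y and e :: "nat \<Rightarrow> nat \<Rightarrow> 'a"
    where y: "\<forall>j<m. y j \<in> principal a"
      and a_eq: "a = (\<Sum>j<m. e 0 j * y j)"
      and rel: "\<forall>j<m. r * e 0 j = 0"
    using flat unfolding flat_submodule_def
    by (elim allE[where x = 1] allE[where x = "\<lambda>_. r"] allE[where x = "\<lambda>_. a"]) auto
  have "\<forall>j<m. \<exists>s. y j = s * a"
    using y unfolding principal_def by blast
  then obtain s where s: "\<forall>j<m. y j = s j * a"
    by metis
  define c where "c = (\<Sum>j<m. e 0 j * s j)"
  have "c * a = (\<Sum>j<m. e 0 j * y j)"
    unfolding c_def sum_distrib_right by (rule sum.cong) (simp_all add: s mult.assoc)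
  moreover have "r * c = (\<Sum>j<m. (r * e 0 j) * s j)"
    unfolding c_def sum_distrib_left by (simp add: mult.assoc)
  ultimately show ?thesis
    using a_eq rel by auto
qed

lemma GPF_ring_imp_quasi_pf_ring:
  assumes "GPF_ring TYPE('a::comm_ring_1)"
  shows "quasi_pf_ring TYPE('a)"
  unfolding quasi_pf_ring_def quasi_pure_def
proof (intro allI ballI)
  fix f h :: 'a
  assume "h \<in> Ann f"
  then have hf: "f * h = 0"
    by (simp add: Ann_def mult.commute)
  from assms obtain n where "n \<ge> 1" and flat: "flat_submodule (principal (h ^ n))"
    unfolding GPF_ring_def by blast
  then obtain n' where n: "n = Suc n'"
    using not0_implies_Suc by force
  have "f * h ^ n = 0"
    using hf by (metis n power_Suc mult.assoc mult_zero_left)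
  then obtain c where cf: "f * c = 0" and ch: "c * h ^ n = h ^ n"
    using flat_principal_annihilator[OF flat] by blast
  have "(h * (1 - c)) ^ n = (1 - c) ^ n' * ((1 - c) * h ^ n)"
    by (simp only: n power_mult_distrib power_Suc ac_simps)
  also have "\<dots> = 0"
    using ch by (simp add: left_diff_distrib)
  finally have "nilpotent (h * (1 - c))"
    unfolding nilpotent_def by blast
  moreover have "c \<in> Ann f"
    using cf by (simp add: Ann_def mult.commute)
  ultimately show "\<exists>g\<in>Ann f. nilpotent (h * (1 - g))"
    by blast
qed

lemma prime_ideal_Inter_chain:
  assumes chain: "subset.chain {P. prime_ideal P} D" and "D \<noteq> {}"
  shows "prime_ideal (\<Inter>D)"
proof -
  have primes: "\<forall>P\<in>D. prime_ideal P" and comparable: "\<forall>P\<in>D. \<forall>Q\<in>D. P \<subseteq> Q \<or> Q \<subseteq> P"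
    using chain unfolding subset_chain_def by auto
  have ideals: "\<forall>P\<in>D. is_ideal P"
    using primes prime_ideal_is_ideal by blast
  have "is_ideal (\<Inter>D)"
    unfolding is_ideal_def
  proof (intro conjI ballI allI)
    show "0 \<in> \<Inter>D"
      using ideals is_ideal_zero by blast
    show "x + y \<in> \<Inter>D" if "x \<in> \<Inter>D" "y \<in> \<Inter>D" for x y
      using that ideals is_ideal_add by blast
    show "r * x \<in> \<Inter>D" if "x \<in> \<Inter>D" for r x
      using that ideals is_ideal_mult_left by blast
  qed
  moreover have "\<Inter>D \<noteq> UNIV"
    using \<open>D \<noteq> {}\<close> primes prime_ideal_one_notin by blast
  moreover have "a \<in> \<Inter>D \<or> b \<in> \<Inter>D" if ab: "a * b \<in> \<Inter>D" for a b
  proof (rule ccontr)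
    assume "\<not> (a \<in> \<Inter>D \<or> b \<in> \<Inter>D)"
    then obtain P Q where PQ: "P \<in> D" "Q \<in> D" "a \<notin> P" "b \<notin> Q"
      by blast
    moreover have "a \<in> P \<or> b \<in> P" "a \<in> Q \<or> b \<in> Q"
      using ab PQ primes prime_ideal_mult_cases by blast+
    moreover have "P \<subseteq> Q \<or> Q \<subseteq> P"
      using comparable PQ by blast
    ultimately show False
      by blast
  qed
  ultimately show ?thesis
    unfolding prime_ideal_def by blast
qed

lemma exists_minimal_prime_below:
  assumes P: "prime_ideal P"
  shows "\<exists>Q. minimal_prime Q \<and> Q \<subseteq> P"
proof -
  \<comment> \<open>Zorn's lemma for inclusion-minimal elements, applied through complements.\<close>
  let ?A = "uminus ` {Q. prime_ideal Q \<and> Q \<subseteq> P}"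
  have "\<exists>M\<in>?A. \<forall>X\<in>?A. M \<subseteq> X \<longrightarrow> X = M"
  proof (rule subset_Zorn_nonempty)
    show "?A \<noteq> {}"
      using P by blast
  next
    fix C
    assume "C \<noteq> {}" and "subset.chain ?A C"
    then have D: "uminus ` C \<noteq> {}" "subset.chain {Q. prime_ideal Q} (uminus ` C)"
      "\<forall>Q\<in>uminus ` C. Q \<subseteq> P"
      unfolding subset_chain_def by auto
    have "\<Inter>(uminus ` C) \<in> {Q. prime_ideal Q \<and> Q \<subseteq> P}"
      using prime_ideal_Inter_chain[OF D(2,1)] D(1,3) by blast
    then have "- \<Inter>(uminus ` C) \<in> ?A"
      by (rule imageI)
    moreover have "- \<Inter>(uminus ` C) = \<Union>C"
      by auto
    ultimately show "\<Union>C \<in> ?A"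
      by simp
  qed
  then obtain Q where Q: "prime_ideal Q" "Q \<subseteq> P"
    and min: "\<forall>X\<in>?A. - Q \<subseteq> X \<longrightarrow> X = - Q"
    by blast
  have "minimal_prime Q"
    unfolding minimal_prime_def
  proof (intro conjI allI impI)
    fix Q'
    assume "prime_ideal Q' \<and> Q' \<subseteq> Q"
    then have "- Q' \<in> ?A" "- Q \<subseteq> - Q'"
      using Q by auto
    then have "- Q' = - Q"
      using min by blast
    then show "Q' = Q"
      by simp
  qed (fact Q(1))
  with Q show ?thesis
    by blast
qed

definition ideal_adjoin :: "'a::comm_ring_1 set \<Rightarrow> 'a \<Rightarrow> 'a set" where
  "ideal_adjoin I a = {m + r * a | m r. m \<in> I}"

lemma is_ideal_ideal_adjoin:
  assumes I: "is_ideal I"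
  shows "is_ideal (ideal_adjoin I a)"
  unfolding is_ideal_def ideal_adjoin_def
proof (intro conjI ballI allI)
  have "0 = 0 + 0 * a"
    by simp
  with is_ideal_zero[OF I] show "0 \<in> {m + r * a | m r. m \<in> I}"
    by blast
next
  fix x y
  assume "x \<in> {m + r * a | m r. m \<in> I}" "y \<in> {m + r * a | m r. m \<in> I}"
  then obtain m1 r1 m2 r2 where "x = m1 + r1 * a" "y = m2 + r2 * a" "m1 \<in> I" "m2 \<in> I"
    by blast
  then have "x + y = (m1 + m2) + (r1 + r2) * a" "m1 + m2 \<in> I"
    using is_ideal_add[OF I] by (auto simp: algebra_simps)
  then show "x + y \<in> {m + r * a | m r. m \<in> I}"
    by blast
next
  fix s x
  assume "x \<in> {m + r * a | m r. m \<in> I}"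
  then obtain m r where "x = m + r * a" "m \<in> I"
    by blast
  then have "s * x = s * m + (s * r) * a" "s * m \<in> I"
    using is_ideal_mult_left[OF I] by (auto simp: algebra_simps)
  then show "s * x \<in> {m + r * a | m r. m \<in> I}"
    by blast
qed


lemma subset_ideal_adjoin: "I \<subseteq> ideal_adjoin I a"
proof
  fix x
  assume "x \<in> I"
  moreover have "x = x + 0 * a"
    by simp
  ultimately show "x \<in> ideal_adjoin I a"
    unfolding ideal_adjoin_def by blast
qed

lemma mem_ideal_adjoin: "is_ideal I \<Longrightarrow> a \<in> ideal_adjoin I a"
  unfolding ideal_adjoin_def by (metis (mono_tags, lifting) is_ideal_zero add_0 mem_Collect_eq mult_1)

lemma is_ideal_Union_chain:
  assumes chain: "subset.chain {I. is_ideal I} C" and "C \<noteq> {}"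
  shows "is_ideal (\<Union>C)"
  unfolding is_ideal_def
proof (intro conjI ballI allI)
  have ideals: "\<forall>I\<in>C. is_ideal I" and comparable: "\<forall>I\<in>C. \<forall>J\<in>C. I \<subseteq> J \<or> J \<subseteq> I"
    using chain unfolding subset_chain_def by auto
  show "0 \<in> \<Union>C"
    using \<open>C \<noteq> {}\<close> ideals is_ideal_zero by blast
  show "r * x \<in> \<Union>C" if "x \<in> \<Union>C" for r x
    using that ideals is_ideal_mult_left by blast
  fix x y
  assume "x \<in> \<Union>C" "y \<in> \<Union>C"
  then have "\<exists>I\<in>C. x \<in> I \<and> y \<in> I"
    using comparable by blast
  then show "x + y \<in> \<Union>C"
    using ideals is_ideal_add by blast
qed

lemma maximal_ideal_disjoint_imp_prime:
  assumes M: "is_ideal M" and disj: "M \<inter> S = {}"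
    and one: "1 \<in> S" and mult: "\<And>s t. s \<in> S \<Longrightarrow> t \<in> S \<Longrightarrow> s * t \<in> S"
    and max: "\<And>I. is_ideal I \<Longrightarrow> I \<inter> S = {} \<Longrightarrow> M \<subseteq> I \<Longrightarrow> I = M"
  shows "prime_ideal M"
  unfolding prime_ideal_def
proof (intro conjI allI impI)
  show "M \<noteq> UNIV"
    using one disj by blast
  have meets: "\<exists>m r. m \<in> M \<and> m + r * a \<in> S" if "a \<notin> M" for a
  proof -
    have "ideal_adjoin M a \<noteq> M"
      using mem_ideal_adjoin[OF M] that by blast
    then have "ideal_adjoin M a \<inter> S \<noteq> {}"
      using max[OF is_ideal_ideal_adjoin[OF M] _ subset_ideal_adjoin] by blast
    then show ?thesis
      unfolding ideal_adjoin_def by blast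
  qed
  fix a b
  assume ab: "a * b \<in> M"
  show "a \<in> M \<or> b \<in> M"
  proof (rule ccontr)
    assume "\<not> (a \<in> M \<or> b \<in> M)"
    then obtain m1 r1 m2 r2 where m: "m1 \<in> M" "m2 \<in> M"
      and S: "m1 + r1 * a \<in> S" "m2 + r2 * b \<in> S"
      using meets[of a] meets[of b] by blast
    have "(m1 + r1 * a) * (m2 + r2 * b) = m1 * (m2 + r2 * b) + m2 * (r1 * a) + (a * b) * (r1 * r2)"
      by (simp add: algebra_simps)
    also have "\<dots> \<in> M"
      using m ab is_ideal_mult_right[OF M] by (intro is_ideal_add[OF M]) blast+
    finally show False
      using mult[OF S] disj by blast
  qed
qed (fact M)

lemma exists_prime_ideal_disjoint:
  fixes S :: "'a::comm_ring_1 set"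
  assumes one: "1 \<in> S" and mult: "\<And>s t. s \<in> S \<Longrightarrow> t \<in> S \<Longrightarrow> s * t \<in> S"
    and zero: "0 \<notin> S"
  shows "\<exists>P. prime_ideal P \<and> P \<inter> S = {}"
proof -
  let ?A = "{I. is_ideal I \<and> I \<inter> S = {}}"
  have "\<exists>M\<in>?A. \<forall>X\<in>?A. M \<subseteq> X \<longrightarrow> X = M"
  proof (rule subset_Zorn_nonempty)
    have "{0} \<in> ?A"
      using zero by (simp add: is_ideal_def)
    then show "?A \<noteq> {}"
      by blast
  next
    fix C
    assume "C \<noteq> {}" and chain: "subset.chain ?A C"
    then have "subset.chain {I. is_ideal I} C" "\<Union>C \<inter> S = {}"
      unfolding subset_chain_def by auto
    with \<open>C \<noteq> {}\<close> show "\<Union>C \<in> ?A"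
      using is_ideal_Union_chain by blast
  qed
  then obtain M where M: "is_ideal M" "M \<inter> S = {}"
    and max: "\<forall>I\<in>?A. M \<subseteq> I \<longrightarrow> I = M"
    by blast
  have "prime_ideal M"
  proof (rule maximal_ideal_disjoint_imp_prime[OF M one mult])
    fix I
    assume "is_ideal I" "I \<inter> S = {}" "M \<subseteq> I"
    then show "I = M"
      using max by blast
  qed
  with M show ?thesis
    by blast
qed

lemma minimal_prime_mem_imp_power_annihilated:
  assumes Q: "minimal_prime Q" and x: "x \<in> Q"
  shows "\<exists>s k. s \<notin> Q \<and> s * x ^ k = 0"
proof (rule ccontr)
  assume none: "\<not> ?thesis"
  have prime: "prime_ideal Q"
    using Q unfolding minimal_prime_def by blast
  define S where "S = {s * x ^ k | s k. s \<notin> Q}"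
  have mem_S: "s * x ^ k \<in> S" if "s \<notin> Q" for s k
    using that unfolding S_def by blast
  have one: "1 \<in> S"
    using mem_S[of 1 0] prime_ideal_one_notin[OF prime] by simp
  have mult: "s * t \<in> S" if "s \<in> S" "t \<in> S" for s t
  proof -
    from that obtain s1 k1 s2 k2 where "s = s1 * x ^ k1" "t = s2 * x ^ k2" "s1 \<notin> Q" "s2 \<notin> Q"
      unfolding S_def by blast
    moreover from this have "s1 * s2 \<notin> Q"
      using prime_ideal_mult_cases[OF prime] by blast
    ultimately show ?thesis
      using mem_S[of "s1 * s2" "k1 + k2"] by (simp add: power_add ac_simps)
  qed
  have "0 \<notin> S"
    using none unfolding S_def by auto
  then obtain P where P: "prime_ideal P" "P \<inter> S = {}"
    using exists_prime_ideal_disjoint[OF one mult] by blast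
  have "P \<subseteq> Q"
  proof
    fix y
    assume "y \<in> P"
    then show "y \<in> Q"
      using mem_S[of y 0] P(2) by auto
  qed
  then have "P = Q"
    using Q P(1) unfolding minimal_prime_def by blast
  moreover have "x \<in> S"
    using mem_S[of 1 1] prime_ideal_one_notin[OF prime] by simp
  ultimately show False
    using x P(2) by blast
qed

lemma quasi_pf_ring_minimal_primes_below_prime_subset:
  fixes P :: "'a::comm_ring_1 set"
  assumes qpf: "quasi_pf_ring TYPE('a)" and P: "prime_ideal P"
    and Q1: "minimal_prime Q1" "Q1 \<subseteq> P" and Q2: "minimal_prime Q2" "Q2 \<subseteq> P"
  shows "Q1 \<subseteq> Q2"
proof
  have prime1: "prime_ideal Q1" and prime2: "prime_ideal Q2"
    using Q1 Q2 unfolding minimal_prime_def by blast+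
  fix x
  assume "x \<in> Q1"
  then obtain s k where s: "s \<notin> Q1" "s * x ^ k = 0"
    using minimal_prime_mem_imp_power_annihilated[OF Q1(1)] by blast
  have "s \<in> Ann (x ^ k)"
    using s unfolding Ann_def by simp
  then obtain g where g: "g * x ^ k = 0" "nilpotent (s * (1 - g))"
    using qpf unfolding quasi_pf_ring_def quasi_pure_def Ann_def by blast
  have "1 - g \<in> P"
    using prime_ideal_nilpotent_mem[OF prime1 g(2)] prime_ideal_mult_cases[OF prime1] s(1) Q1(2)
    by blast
  show "x \<in> Q2"
  proof (rule ccontr)
    assume "x \<notin> Q2"
    moreover have "g * x ^ k \<in> Q2"
      using g(1) is_ideal_zero[OF prime_ideal_is_ideal[OF prime2]] by simp
    ultimately have "g \<in> P"
      using prime_ideal_mult_cases[OF prime2] prime_ideal_power_mem[OF prime2] Q2(2) by blast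
    with \<open>1 - g \<in> P\<close> have "g + (1 - g) \<in> P"
      using is_ideal_add[OF prime_ideal_is_ideal[OF P]] by blast
    then show False
      using prime_ideal_one_notin[OF P] by simp
  qed
qed

lemma quasi_pf_ring_imp_mp_ring:
  assumes "quasi_pf_ring TYPE('a::comm_ring_1)"
  shows "mp_ring TYPE('a)"
  unfolding mp_ring_def
proof (intro allI impI ex_ex1I)
  fix P :: "'a set"
  assume P: "prime_ideal P"
  then show "\<exists>Q. minimal_prime Q \<and> Q \<subseteq> P"
    by (rule exists_minimal_prime_below)
  fix Q1 Q2
  assume "minimal_prime Q1 \<and> Q1 \<subseteq> P" "minimal_prime Q2 \<and> Q2 \<subseteq> P"
  with P have "Q1 \<subseteq> Q2" "prime_ideal Q1" "minimal_prime Q2"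
    using quasi_pf_ring_minimal_primes_below_prime_subset[OF assms] minimal_prime_def by blast+
  then show "Q1 = Q2"
    unfolding minimal_prime_def by blast
qed

theorem theorem4p2:
  "(GPF_ring TYPE('a::comm_ring_1) \<longrightarrow> quasi_pf_ring TYPE('a)) \<and>
   (quasi_pf_ring TYPE('a) \<longrightarrow> mp_ring TYPE('a))"
  using GPF_ring_imp_quasi_pf_ring quasi_pf_ring_imp_mp_ring by blast

end
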